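(* Let $01234$ be a convex pentagon inscribed in a circle of radius $R$, with vertices in cyclic order and area $A$. Let $$a_0=|23|,\quad a_1=|34|,\quad a_2=|40|,\quad a_3=|01|,\quad a_4=|12|,$$ and let $X=|14|$. Put $p=a_2a_3$, $P=a_0a_1a_4$, $q=a_2^2+a_3^2$, and $Q=a_0^2+a_1^2+a_4^2$. Then $$(X^2-q)\,4AR=p\,[(Q-q)X+2P].$$
   Context: $|ij|$ denotes the distance between vertices $i$ and $j$. *)

theory Defs
  imports "HOL-Analysis.Analysis"
begin

text \<open>Points of the Euclidean plane are modelled as complex numbers.
  The 2D cross product (signed parallelogram area) of two vectors.\<close>
definition cross2 :: "complex \<Rightarrow> complex \<Rightarrow> real" where
  "cross2 u w = Re u * Im w - Im u * Re w"

definition convex_polygon_ccw :: "complex list \<Rightarrow> bool" where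
  "convex_polygon_ccw vs \<longleftrightarrow>
     (let n = length vs in
       \<forall>i<n. \<forall>j<n. j \<noteq> i \<and> j \<noteq> Suc i mod n \<longrightarrow>
          cross2 (vs ! (Suc i mod n) - vs ! i) (vs ! j - vs ! i) > 0)"

definition convex_polygon :: "complex list \<Rightarrow> bool" where
  "convex_polygon vs \<longleftrightarrow> length vs \<ge> 3 \<and>
     (convex_polygon_ccw vs \<or> convex_polygon_ccw (rev vs))"

definition polygon_area :: "complex list \<Rightarrow> real" where
  "polygon_area vs =
     \<bar>\<Sum>i<length vs. cross2 (vs ! i) (vs ! (Suc i mod length vs))\<bar> / 2"

end

(*
  Let 2\<theta>\<^sub>k be the central angle over the side a\<^sub>k. Then a\<^sub>k = 2R sin \<theta>\<^sub>k,
  \<theta>\<^sub>0 + ... + \<theta>\<^sub>4 = \<pi>, the diagonal is X = 2R sin(\<theta>\<^sub>2 + \<theta>\<^sub>3), and splitting the pentagon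
  into the five triangles with apex at the centre gives A = R\<^sup>2 \<Sum> sin \<theta>\<^sub>k cos \<theta>\<^sub>k.
  After these substitutions the claim is a trigonometric identity that follows from the
  addition formulas. No angles are ever introduced: the sine and cosine of a half central
  angle are algebraic functions of the endpoints of the chord, and for three points in
  counterclockwise order on the circle the addition formulas become polynomial identities
  in their coordinates.
*)

theory Submission
  imports Defs
begin

definition ccw :: "complex \<Rightarrow> complex \<Rightarrow> complex \<Rightarrow> bool" where
  "ccw x y z \<longleftrightarrow> cross2 (y - x) (z - x) > 0"

lemma ccw_rotate: "ccw x y z \<longleftrightarrow> ccw y z x"
  unfolding ccw_def cross2_def by (simp add: algebra_simps)

lemma ccw_imp_distinct:
  assumes "ccw x y z"
  shows "x \<noteq> y" "y \<noteq> z" "x \<noteq> z"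
  using assms unfolding ccw_def cross2_def by auto

lemma convex_polygon_ccw_imp_ccw:
  assumes "convex_polygon_ccw vs" "i < length vs" "j < length vs"
    and "j \<noteq> i" "j \<noteq> Suc i mod length vs"
  shows "ccw (vs ! i) (vs ! (Suc i mod length vs)) (vs ! j)"
  using assms by (simp add: convex_polygon_ccw_def ccw_def Let_def)

text \<open>Among any three vertices of a pentagon two are adjacent, so each cyclically ordered
  triple contains an edge.\<close>

lemma convex_pentagon_ccw_triple:
  assumes convex: "convex_polygon_ccw vs" and len: "length vs = 5"
    and ijk: "i < j" "j < k" "k < 5"
  shows "ccw (vs ! i) (vs ! j) (vs ! k)"
proof -
  have edge: "ccw (vs ! m) (vs ! (Suc m mod 5)) (vs ! n)"
    if "m < 5" "n < 5" "n \<noteq> m" "n \<noteq> Suc m mod 5" for m n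
    using convex_polygon_ccw_imp_ccw[OF convex] that len by simp
  consider "j = Suc i" | "k = Suc j" | "i = 0" "k = 4"
    using ijk by linarith
  then show ?thesis
  proof cases
    case 1
    then show ?thesis using edge[of i k] ijk by simp
  next
    case 2
    then have "ccw (vs ! j) (vs ! k) (vs ! i)" using edge[of j i] ijk by simp
    then show ?thesis using ccw_rotate by blast
  next
    case 3
    then have "ccw (vs ! k) (vs ! i) (vs ! j)" using edge[of 4 j] ijk by simp
    then show ?thesis using ccw_rotate by blast
  qed
qed

text \<open>For \<open>u\<close>, \<open>w\<close> on the circle with centre \<open>c\<close> and radius \<open>R\<close>: the sine and the
  cosine of half the counterclockwise central angle from \<open>u\<close> to \<open>w\<close>.\<close>

definition chord_sin :: "real \<Rightarrow> complex \<Rightarrow> complex \<Rightarrow> real" where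
  "chord_sin R u w = dist u w / (2 * R)"

definition chord_cos :: "complex \<Rightarrow> real \<Rightarrow> complex \<Rightarrow> complex \<Rightarrow> real" where
  "chord_cos c R u w = cross2 (u - c) (w - c) / (R * dist u w)"

lemma dist_power2_coords: "(dist u w)\<^sup>2 = (Re u - Re w)\<^sup>2 + (Im u - Im w)\<^sup>2"
  by (simp add: dist_norm cmod_power2)

lemma dist_eq_imp_power2_coords:
  assumes "dist u c = R"
  shows "(Re u - Re c)\<^sup>2 + (Im u - Im c)\<^sup>2 = R\<^sup>2"
  using assms dist_power2_coords[of u c] by simp

lemma chord_sin_commute: "chord_sin R w u = chord_sin R u w"
  by (simp add: chord_sin_def dist_commute)

lemma chord_cos_commute: "chord_cos c R w u = - chord_cos c R u w"
  by (simp add: chord_cos_def dist_commute cross2_def algebra_simps minus_divide_left)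

lemma chord_cos_sin_squared:
  assumes "R > 0" "dist u c = R" "dist w c = R" "u \<noteq> w"
  shows "(chord_cos c R u w)\<^sup>2 + (chord_sin R u w)\<^sup>2 = 1"
proof -
  have "4 * (cross2 (u - c) (w - c))\<^sup>2 + ((dist u w)\<^sup>2)\<^sup>2 = 4 * R\<^sup>2 * (dist u w)\<^sup>2"
    using dist_eq_imp_power2_coords[OF assms(2)] dist_eq_imp_power2_coords[OF assms(3)]
    unfolding cross2_def dist_power2_coords by simp algebra
  then show ?thesis
    using assms by (simp add: chord_cos_def chord_sin_def field_simps power2_eq_square)
qed

lemma cross2_eq_chord_sin_cos:
  assumes "R > 0" "u \<noteq> w"
  shows "cross2 (u - c) (w - c) = 2 * R\<^sup>2 * chord_sin R u w * chord_cos c R u w"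
  using assms by (simp add: chord_cos_def chord_sin_def power2_eq_square)

lemma chord_add:
  assumes R: "R > 0" and on: "dist u c = R" "dist v c = R" "dist w c = R"
    and uvw: "ccw u v w"
  shows chord_sin_add:
      "chord_sin R u w = chord_sin R u v * chord_cos c R v w + chord_cos c R u v * chord_sin R v w"
    and chord_cos_add:
      "chord_cos c R u w = chord_cos c R u v * chord_cos c R v w - chord_sin R u v * chord_sin R v w"
proof -
  define a b d where "a = u - c" "b = v - c" "d = w - c"
  have shift: "v - u = b - a" "w - u = d - a" "dist u v = dist a b" "dist v w = dist b d"
    "dist u w = dist a d" "dist u c = dist a 0" "dist v c = dist b 0" "dist w c = dist d 0"
    by (simp_all add: a_b_d_def dist_norm)
  define l1 l2 l3 where "l1 = dist a b" "l2 = dist b d" "l3 = dist a d"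
  define k12 k23 k13 where "k12 = cross2 a b" "k23 = cross2 b d" "k13 = cross2 a d"
  define T where "T = cross2 (b - a) (d - a)"
  have T: "T > 0" using uvw by (simp add: ccw_def T_def shift)
  have l: "l1 > 0" "l2 > 0" "l3 > 0"
    using ccw_imp_distinct[OF uvw] by (auto simp: l1_l2_l3_def a_b_d_def)
  note coords = on[unfolded shift, THEN dist_eq_imp_power2_coords, simplified]
    l1_l2_l3_def[THEN arg_cong[where f = "\<lambda>x. x\<^sup>2"], unfolded dist_power2_coords]
    k12_k23_k13_def[unfolded cross2_def] T_def[unfolded cross2_def minus_complex.sel]
  have sin_num: "l1\<^sup>2 * k23 + k12 * l2\<^sup>2 = 2 * R\<^sup>2 * T"
    using coords by algebra
  have prod_squared: "(l1 * l2 * l3)\<^sup>2 = (2 * R * T)\<^sup>2"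
    using coords by algebra
  have cos_num_squared: "(4 * k12 * k23 - l1\<^sup>2 * l2\<^sup>2) * l3\<^sup>2 = 8 * R\<^sup>2 * k13 * T"
    using coords by algebra
  have prod: "l1 * l2 * l3 = 2 * R * T"
    using prod_squared l R T by (simp add: power2_eq_iff_nonneg)
  have "(4 * k12 * k23 - l1\<^sup>2 * l2\<^sup>2) * l3 * l3 = 4 * R * k13 * (2 * R * T)"
    using cos_num_squared by (simp add: power2_eq_square algebra_simps)
  also have "\<dots> = (4 * R * k13 * l1 * l2) * l3"
    unfolding prod[symmetric] by (simp add: algebra_simps)
  finally have cos_num: "(4 * k12 * k23 - l1\<^sup>2 * l2\<^sup>2) * l3 = 4 * R * k13 * l1 * l2"
    using l by simp
  show "chord_sin R u w = chord_sin R u v * chord_cos c R v w + chord_cos c R u v * chord_sin R v w"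
    unfolding chord_sin_def chord_cos_def shift a_b_d_def[symmetric] l1_l2_l3_def[symmetric]
      k12_k23_k13_def[symmetric]
    using sin_num prod l R by (simp add: field_simps power2_eq_square)
  show "chord_cos c R u w = chord_cos c R u v * chord_cos c R v w - chord_sin R u v * chord_sin R v w"
    unfolding chord_sin_def chord_cos_def shift a_b_d_def[symmetric] l1_l2_l3_def[symmetric]
      k12_k23_k13_def[symmetric]
    using cos_num l R by (simp add: field_simps power2_eq_square)
qed

text \<open>Read \<open>(c\<^sub>k, s\<^sub>k)\<close> as \<open>(cos \<theta>\<^sub>k, sin \<theta>\<^sub>k)\<close>, \<open>Z\<close> as \<open>\<theta>\<^sub>2 + \<theta>\<^sub>3\<close> and \<open>W\<close> as
  \<open>\<theta>\<^sub>4 + \<theta>\<^sub>0\<close>; the hypotheses \<open>angle_sum\<close> say \<open>W + \<theta>\<^sub>1 = \<pi> - Z\<close>.\<close>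

lemma pentagon_half_angle_identity:
  fixes s0 s1 s2 s3 s4 c0 c1 c2 c3 c4 sZ cZ sW cW :: real
  assumes unit: "c0\<^sup>2 + s0\<^sup>2 = 1" "c1\<^sup>2 + s1\<^sup>2 = 1" "c2\<^sup>2 + s2\<^sup>2 = 1"
      "c3\<^sup>2 + s3\<^sup>2 = 1" "c4\<^sup>2 + s4\<^sup>2 = 1"
    and Z: "sZ = s2 * c3 + c2 * s3" "cZ = c2 * c3 - s2 * s3"
    and W: "sW = s4 * c0 + c4 * s0" "cW = c4 * c0 - s4 * s0"
    and angle_sum: "sZ = sW * c1 + cW * s1" "- cZ = cW * c1 - sW * s1"
  shows "(sZ\<^sup>2 - s2\<^sup>2 - s3\<^sup>2) * (s0 * c0 + s1 * c1 + s2 * c2 + s3 * c3 + s4 * c4)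
    = s2 * s3 * (2 * (s0\<^sup>2 + s1\<^sup>2 + s4\<^sup>2 - s2\<^sup>2 - s3\<^sup>2) * sZ + 4 * s0 * s1 * s4)"
proof -
  have sin_sq_diff: "sZ\<^sup>2 - s2\<^sup>2 - s3\<^sup>2 = 2 * s2 * s3 * cZ"
    using unit(3,4) Z by algebra
  have cos_Z_23: "cZ * (s2 * c2 + s3 * c3) = sZ - (s2\<^sup>2 + s3\<^sup>2) * sZ"
    using unit(3,4) Z by algebra
  have cos_Z_014:
      "cZ * (s0 * c0 + s1 * c1 + s4 * c4) = (s0\<^sup>2 + s1\<^sup>2 + s4\<^sup>2) * sZ - sZ + 2 * s0 * s1 * s4"
    using unit(1,2,5) W angle_sum by algebra
  have "(sZ\<^sup>2 - s2\<^sup>2 - s3\<^sup>2) * (s0 * c0 + s1 * c1 + s2 * c2 + s3 * c3 + s4 * c4)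
      = 2 * s2 * s3 * (cZ * (s0 * c0 + s1 * c1 + s4 * c4) + cZ * (s2 * c2 + s3 * c3))"
    unfolding sin_sq_diff by (simp add: algebra_simps)
  also have "\<dots> = s2 * s3 * (2 * (s0\<^sup>2 + s1\<^sup>2 + s4\<^sup>2 - s2\<^sup>2 - s3\<^sup>2) * sZ + 4 * s0 * s1 * s4)"
    unfolding cos_Z_23 cos_Z_014 by (simp add: algebra_simps)
  finally show ?thesis .
qed

lemma polygon_area_pentagon:
  "polygon_area [v0, v1, v2, v3, v4]
    = \<bar>cross2 v0 v1 + cross2 v1 v2 + cross2 v2 v3 + cross2 v3 v4 + cross2 v4 v0\<bar> / 2"
proof -
  have sum5: "(\<Sum>i<5. f i) = f 0 + f 1 + f 2 + f 3 + f 4" for f :: "nat \<Rightarrow> real"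
    by (simp add: eval_nat_numeral)
  show ?thesis
    unfolding polygon_area_def by (simp add: sum5)
qed

lemma polygon_area_pentagon_reverse:
  "polygon_area [v0, v4, v3, v2, v1] = polygon_area [v0, v1, v2, v3, v4]"
proof -
  have "cross2 v0 v4 + cross2 v4 v3 + cross2 v3 v2 + cross2 v2 v1 + cross2 v1 v0
      = - (cross2 v0 v1 + cross2 v1 v2 + cross2 v2 v3 + cross2 v3 v4 + cross2 v4 v0)"
    by (simp add: cross2_def algebra_simps)
  then show ?thesis
    unfolding polygon_area_pentagon by (simp only: abs_minus_cancel)
qed

lemma polygon_area_pentagon_chords:
  assumes R: "R > 0" and fan: "ccw w1 w2 w3" "ccw w1 w3 w4" "ccw w1 w4 w0"
  shows "polygon_area [w0, w1, w2, w3, w4] = R\<^sup>2 *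
    (chord_sin R w0 w1 * chord_cos c R w0 w1 + chord_sin R w1 w2 * chord_cos c R w1 w2
     + chord_sin R w2 w3 * chord_cos c R w2 w3 + chord_sin R w3 w4 * chord_cos c R w3 w4
     + chord_sin R w4 w0 * chord_cos c R w4 w0)"
proof -
  define S where "S = cross2 w0 w1 + cross2 w1 w2 + cross2 w2 w3 + cross2 w3 w4 + cross2 w4 w0"
  have S_centered: "S = cross2 (w0 - c) (w1 - c) + cross2 (w1 - c) (w2 - c)
      + cross2 (w2 - c) (w3 - c) + cross2 (w3 - c) (w4 - c) + cross2 (w4 - c) (w0 - c)"
    by (simp add: S_def cross2_def algebra_simps)
  have S_fan:
      "S = cross2 (w2 - w1) (w3 - w1) + cross2 (w3 - w1) (w4 - w1) + cross2 (w4 - w1) (w0 - w1)"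
    by (simp add: S_def cross2_def algebra_simps)
  have distinct: "w0 \<noteq> w1" "w1 \<noteq> w2" "w2 \<noteq> w3" "w3 \<noteq> w4" "w4 \<noteq> w0"
    using ccw_imp_distinct[OF fan(1)] ccw_imp_distinct[OF fan(2)] ccw_imp_distinct[OF fan(3)]
    by auto
  have "S = 2 * R\<^sup>2 *
    (chord_sin R w0 w1 * chord_cos c R w0 w1 + chord_sin R w1 w2 * chord_cos c R w1 w2
     + chord_sin R w2 w3 * chord_cos c R w2 w3 + chord_sin R w3 w4 * chord_cos c R w3 w4
     + chord_sin R w4 w0 * chord_cos c R w4 w0)"
    unfolding S_centered
      cross2_eq_chord_sin_cos[OF R distinct(1)] cross2_eq_chord_sin_cos[OF R distinct(2)]
      cross2_eq_chord_sin_cos[OF R distinct(3)] cross2_eq_chord_sin_cos[OF R distinct(4)]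
      cross2_eq_chord_sin_cos[OF R distinct(5)]
    by (simp add: distrib_left mult.assoc)
  moreover have "S > 0"
    using fan unfolding S_fan ccw_def by simp
  ultimately show ?thesis
    unfolding polygon_area_pentagon S_def[symmetric] by simp
qed

lemma inscribed_pentagon_identity:
  fixes w0 w1 w2 w3 w4 c :: complex and R :: real
  assumes R: "R > 0"
    and on: "dist w0 c = R" "dist w1 c = R" "dist w2 c = R" "dist w3 c = R" "dist w4 c = R"
    and fan: "ccw w1 w2 w3" "ccw w1 w3 w4" "ccw w1 w4 w0"
  defines "a0 \<equiv> dist w2 w3" and "a1 \<equiv> dist w3 w4" and "a2 \<equiv> dist w4 w0"
    and "a3 \<equiv> dist w0 w1" and "a4 \<equiv> dist w1 w2" and "X \<equiv> dist w1 w4"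
    and "A \<equiv> polygon_area [w0, w1, w2, w3, w4]"
  shows "(X\<^sup>2 - (a2\<^sup>2 + a3\<^sup>2)) * (4 * A * R)
    = a2 * a3 * ((a0\<^sup>2 + a1\<^sup>2 + a4\<^sup>2 - (a2\<^sup>2 + a3\<^sup>2)) * X + 2 * (a0 * a1 * a4))"
proof -
  define s0 s1 s2 s3 s4 where "s0 = chord_sin R w2 w3" "s1 = chord_sin R w3 w4"
    "s2 = chord_sin R w4 w0" "s3 = chord_sin R w0 w1" "s4 = chord_sin R w1 w2"
  define c0 c1 c2 c3 c4 where "c0 = chord_cos c R w2 w3" "c1 = chord_cos c R w3 w4"
    "c2 = chord_cos c R w4 w0" "c3 = chord_cos c R w0 w1" "c4 = chord_cos c R w1 w2"
  define sZ cZ sW cW where "sZ = chord_sin R w4 w1" "cZ = chord_cos c R w4 w1"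
    "sW = chord_sin R w1 w3" "cW = chord_cos c R w1 w3"
  note s_defs = s0_s1_s2_s3_s4_def and c_defs = c0_c1_c2_c3_c4_def
    and ZW_defs = sZ_cZ_sW_cW_def
  have distinct: "w2 \<noteq> w3" "w3 \<noteq> w4" "w4 \<noteq> w0" "w0 \<noteq> w1" "w1 \<noteq> w2"
    using ccw_imp_distinct[OF fan(1)] ccw_imp_distinct[OF fan(2)] ccw_imp_distinct[OF fan(3)]
    by auto
  have unit: "c0\<^sup>2 + s0\<^sup>2 = 1" "c1\<^sup>2 + s1\<^sup>2 = 1" "c2\<^sup>2 + s2\<^sup>2 = 1"
      "c3\<^sup>2 + s3\<^sup>2 = 1" "c4\<^sup>2 + s4\<^sup>2 = 1"
    unfolding s_defs c_defs using chord_cos_sin_squared R on distinct by blast+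
  have "ccw w4 w0 w1"
    using fan(3) ccw_rotate by blast
  then have Z: "sZ = s2 * c3 + c2 * s3" "cZ = c2 * c3 - s2 * s3"
    unfolding s_defs c_defs ZW_defs using chord_add R on by blast+
  have W: "sW = s4 * c0 + c4 * s0" "cW = c4 * c0 - s4 * s0"
    unfolding s_defs c_defs ZW_defs using chord_add R on fan(1) by blast+
  have angle_sum: "sZ = sW * c1 + cW * s1" "- cZ = cW * c1 - sW * s1"
    unfolding s_defs c_defs ZW_defs
    using chord_add[OF R on(2,4,5) fan(2)]
    by (simp_all add: chord_sin_commute[of R w1 w4] chord_cos_commute[of c R w1 w4])
  have area: "A = R\<^sup>2 * (s0 * c0 + s1 * c1 + s2 * c2 + s3 * c3 + s4 * c4)"
    unfolding A_def s_defs c_defs polygon_area_pentagon_chords[OF R fan, where c = c]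
    by (simp add: algebra_simps)
  have sides: "a0 = 2 * R * s0" "a1 = 2 * R * s1" "a2 = 2 * R * s2" "a3 = 2 * R * s3"
      "a4 = 2 * R * s4" "X = 2 * R * sZ"
    unfolding a0_def a1_def a2_def a3_def a4_def X_def s_defs ZW_defs chord_sin_def
    using R by (simp_all add: dist_commute)
  have "(X\<^sup>2 - (a2\<^sup>2 + a3\<^sup>2)) * (4 * A * R) = 16 * R ^ 5 *
      ((sZ\<^sup>2 - s2\<^sup>2 - s3\<^sup>2) * (s0 * c0 + s1 * c1 + s2 * c2 + s3 * c3 + s4 * c4))"
    unfolding area sides by algebra
  also have "\<dots> = 16 * R ^ 5 *
      (s2 * s3 * (2 * (s0\<^sup>2 + s1\<^sup>2 + s4\<^sup>2 - s2\<^sup>2 - s3\<^sup>2) * sZ + 4 * s0 * s1 * s4))"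
    using pentagon_half_angle_identity[OF unit Z W angle_sum] by simp
  also have "\<dots> = a2 * a3 * ((a0\<^sup>2 + a1\<^sup>2 + a4\<^sup>2 - (a2\<^sup>2 + a3\<^sup>2)) * X + 2 * (a0 * a1 * a4))"
    unfolding sides by algebra
  finally show ?thesis .
qed

theorem corollary5:
  fixes v0 v1 v2 v3 v4 c :: complex
    and R A a0 a1 a2 a3 a4 X p P q Q :: real
  assumes convex: "convex_polygon [v0, v1, v2, v3, v4]"
    and inscribed: "R > 0" "dist v0 c = R" "dist v1 c = R" "dist v2 c = R"
      "dist v3 c = R" "dist v4 c = R"
    and area: "A = polygon_area [v0, v1, v2, v3, v4]"
    and sides: "a0 = dist v2 v3" "a1 = dist v3 v4" "a2 = dist v4 v0"
      "a3 = dist v0 v1" "a4 = dist v1 v2"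
    and diag: "X = dist v1 v4"
    and defs: "p = a2 * a3" "P = a0 * a1 * a4" "q = a2\<^sup>2 + a3\<^sup>2"
      "Q = a0\<^sup>2 + a1\<^sup>2 + a4\<^sup>2"
  shows "(X\<^sup>2 - q) * (4 * A * R) = p * ((Q - q) * X + 2 * P)"
proof -
  have "convex_polygon_ccw [v0, v1, v2, v3, v4] \<or> convex_polygon_ccw [v4, v3, v2, v1, v0]"
    using convex by (simp add: convex_polygon_def)
  then show ?thesis
  proof
    assume "convex_polygon_ccw [v0, v1, v2, v3, v4]"
    note triple = convex_pentagon_ccw_triple[OF this]
    have "ccw v1 v2 v3" "ccw v1 v3 v4" "ccw v1 v4 v0"
      using triple[of 1 2 3] triple[of 1 3 4] triple[of 0 1 4] by (simp_all add: ccw_rotate[of v0])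
    from inscribed_pentagon_identity[OF inscribed this] show ?thesis
      unfolding defs sides diag area by simp
  next
    assume "convex_polygon_ccw [v4, v3, v2, v1, v0]"
    note triple = convex_pentagon_ccw_triple[OF this]
    have "ccw v4 v3 v2" "ccw v4 v2 v1" "ccw v4 v1 v0"
      using triple[of 0 1 2] triple[of 0 2 3] triple[of 0 3 4] by simp_all
    \<comment> \<open>The identity for the counterclockwise pentagon \<open>v0 v4 v3 v2 v1\<close> is the claimed one
      up to the swaps \<open>a1 \<leftrightarrow> a4\<close>, \<open>a2 \<leftrightarrow> a3\<close>, under which it is invariant.\<close>
    from inscribed_pentagon_identity[OF inscribed(1,2,6,5,4,3) this] show ?thesis
      unfolding defs sides diag area polygon_area_pentagon_reverse
      by (simp add: dist_commute algebra_simps)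
  qed
qed

end
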